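(* Let $G$ be an infinite abelian group and $(a_n)_{n\in\omega}$ a $T$-sequence in $G$. Then the coarse space $(G,\mathcal{S}_{\tau(a_n)})$ is metrizable if and only if $G$ is countable.
   Context: A sequence $(a_n)$ in an abelian group $G$ is a $T$-sequence if there is a Hausdorff group topology on $G$ in which $(a_n)\to0$; $\tau(a_n)$ is the strongest group topology on $G$ in which $(a_n)\to0$. $\mathcal{S}_{\tau}$ is the smallest group ideal on $G$ containing every set $\{x\}\cup\{x_n:n\in\omega\}$ with $x_n\to x$ in $(G,\tau)$; a group ideal (family of subsets containing all finite sets, closed under subsets and under $(A,B)\mapsto A-B$) defines the coarse structure on $G$ with base $\{\{(x,y):x\in A+y\}:A\in\mathcal{I}\}$. A coarse space is metrizable iff its coarse structure has a countable base (a subfamily such that every entourage is contained in a member of it). *)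

theory Defs
  imports "HOL-Analysis.Analysis"
begin

definition group_topology :: "'a::ab_group_add topology \<Rightarrow> bool" where
  "group_topology T \<longleftrightarrow> topspace T = UNIV \<and>
     continuous_map (prod_topology T T) T (\<lambda>(x, y). x + y) \<and>
     continuous_map T T uminus"

definition T_sequence :: "(nat \<Rightarrow> 'a::ab_group_add) \<Rightarrow> bool" where
  "T_sequence a \<longleftrightarrow> (\<exists>T. group_topology T \<and> Hausdorff_space T \<and> limitin T a 0 sequentially)"

definition tau_seq :: "(nat \<Rightarrow> 'a::ab_group_add) \<Rightarrow> 'a topology" where
  "tau_seq a = (THE T. group_topology T \<and> limitin T a 0 sequentially \<and>
      (\<forall>T'. group_topology T' \<and> limitin T' a 0 sequentially \<longrightarrow>
             (\<forall>U. openin T' U \<longrightarrow> openin T U)))"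

definition set_diff_grp :: "'a::ab_group_add set \<Rightarrow> 'a set \<Rightarrow> 'a set" where
  "set_diff_grp A B = {a - b | a b. a \<in> A \<and> b \<in> B}"

definition group_ideal :: "'a::ab_group_add set set \<Rightarrow> bool" where
  "group_ideal I \<longleftrightarrow> (\<forall>F. finite F \<longrightarrow> F \<in> I) \<and>
     (\<forall>A B. A \<in> I \<and> B \<subseteq> A \<longrightarrow> B \<in> I) \<and>
     (\<forall>A B. A \<in> I \<and> B \<in> I \<longrightarrow> set_diff_grp A B \<in> I)"

definition S_ideal :: "'a::ab_group_add topology \<Rightarrow> 'a set set" where
  "S_ideal T = \<Inter> {I. group_ideal I \<and>
      (\<forall>x xs. limitin T xs x sequentially \<longrightarrow> insert x (range xs) \<in> I)}"

definition ideal_entourage :: "'a::ab_group_add set \<Rightarrow> ('a \<times> 'a) set" where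
  "ideal_entourage A = {(x, y). x \<in> (\<lambda>a. a + y) ` A}"

definition ideal_coarse_structure :: "'a::ab_group_add set set \<Rightarrow> ('a \<times> 'a) set set" where
  "ideal_coarse_structure I = {E. \<exists>A\<in>I. E \<subseteq> ideal_entourage A}"

text \<open>A coarse structure is metrizable iff it has a countable base.\<close>
definition coarse_metrizable :: "('a \<times> 'a) set set \<Rightarrow> bool" where
  "coarse_metrizable \<E> \<longleftrightarrow> (\<exists>\<B>. countable \<B> \<and> \<B> \<subseteq> \<E> \<and>
      (\<forall>E\<in>\<E>. \<exists>F\<in>\<B>. E \<subseteq> F))"

end

theory Submission
  imports Defs
begin

text \<open>
  The topology \<open>\<tau>(a)\<close> has an explicit base at \<open>0\<close> (Protasov and Zelenyuk): for every sequence
  \<open>(m\<^sub>i)\<close> the set of finite sums \<open>e\<^sub>0 + \<dots> + e\<^sub>k\<close> with \<open>e\<^sub>i \<in> A(m\<^sub>i) = {0} \<union> {a\<^sub>n, -a\<^sub>n | n \<ge> m\<^sub>i}\<close>.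
  In a Hausdorff group topology in which \<open>a\<^sub>n \<rightarrow> 0\<close>, every \<open>A(m)\<close>, and hence every finite sum of
  such sets, is compact and therefore closed. Given a sequence that escapes from every word ball
  \<open>C\<^sub>k\<close> of \<open>D = R - R\<close>, \<open>R = {0} \<union> {a\<^sub>n}\<close>, this lets one choose the \<open>m\<^sub>i\<close> one at a time so that the
  neighbourhood they define misses infinitely many terms of the sequence. Hence a \<open>\<tau>(a)\<close>-convergent
  sequence eventually stays in a translate of some \<open>C\<^sub>k\<close>, and \<open>S\<^sub>\<tau>\<close> is exactly the ideal of subsets
  of the sets \<open>F - C\<^sub>k\<close> with \<open>F\<close> finite. That ideal has a countable cofinal family when \<open>G\<close> is
  countable. Conversely, all members of \<open>S\<^sub>\<tau>\<close> are countable and every singleton gives an entourage,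
  so a countable base covers \<open>G\<close> by countably many countable sets.
\<close>

lemma sum_lessThan_double:
  fixes h :: "nat \<Rightarrow> 'a::comm_monoid_add"
  shows "(\<Sum>i<2 * n. h i) = (\<Sum>i<n. h (2 * i) + h (2 * i + 1))"
  by (induction n) (simp_all add: algebra_simps)

lemma sum_lessThan_pad_zero:
  fixes k n :: nat
  assumes "k \<le> n"
  shows "(\<Sum>i<n. if i < k then f i else 0) = (\<Sum>i<k. f i)"
  using assms by (intro sum.mono_neutral_cong_right) auto

lemma sum_mem_halving_chain:
  fixes W :: "nat \<Rightarrow> 'a::comm_monoid_add set"
  assumes zero: "\<And>n. 0 \<in> W n"
    and halving: "\<And>n p q. p \<in> W (Suc n) \<Longrightarrow> q \<in> W (Suc n) \<Longrightarrow> p + q \<in> W n"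
    and f: "\<And>i. f i \<in> W (Suc (j + i))"
  shows "(\<Sum>i<k. f i) \<in> W j"
  using f
proof (induction k arbitrary: j f)
  case 0
  then show ?case using zero by simp
next
  case (Suc k)
  have "f 0 \<in> W (Suc j)" using Suc.prems[of 0] by simp
  moreover have "f (Suc i) \<in> W (Suc (Suc j + i))" for i
    using Suc.prems[of "Suc i"] by simp
  then have "(\<Sum>i<k. f (Suc i)) \<in> W (Suc j)"
    by (rule Suc.IH)
  ultimately show ?case
    unfolding sum.lessThan_Suc_shift by (rule halving)
qed

lemma group_topology_topspace: "group_topology T \<Longrightarrow> topspace T = UNIV"
  unfolding group_topology_def by blast

lemma group_topology_continuous_add:
  "group_topology T \<Longrightarrow> continuous_map (prod_topology T T) T (\<lambda>(x, y). x + y)"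
  unfolding group_topology_def by blast

lemma group_topology_continuous_uminus: "group_topology T \<Longrightarrow> continuous_map T T uminus"
  unfolding group_topology_def by blast

lemma group_topology_continuous_translate:
  assumes "group_topology T"
  shows "continuous_map T T (\<lambda>z. x + z)"
proof -
  have "continuous_map T (prod_topology T T) (\<lambda>z. (x, z))"
    using group_topology_topspace[OF assms] by (simp add: continuous_map_pairwise o_def)
  from continuous_map_compose[OF this group_topology_continuous_add[OF assms]]
  show ?thesis by (simp add: o_def)
qed

lemma group_topology_openin_translate:
  assumes "group_topology T" and "openin T W"
  shows "openin T {z. x + z \<in> W}"
  using group_topology_continuous_translate[OF assms(1)] assms(2) group_topology_topspace[OF assms(1)]
  unfolding continuous_map by simp

lemma group_topology_openin_add_preimage:
  assumes "group_topology T" and "openin T V"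
  shows "openin (prod_topology T T) {(p, q). p + q \<in> V}"
proof -
  have "openin (prod_topology T T) {z \<in> topspace (prod_topology T T). (\<lambda>(x, y). x + y) z \<in> V}"
    using group_topology_continuous_add[OF assms(1)] assms(2) unfolding continuous_map by blast
  then show ?thesis
    using group_topology_topspace[OF assms(1)] by (simp add: case_prod_unfold)
qed

lemma group_topology_half_nbhd:
  assumes "group_topology T" and "openin T V" and "0 \<in> V"
  obtains W where "openin T W" "0 \<in> W" "\<And>p q. p \<in> W \<Longrightarrow> q \<in> W \<Longrightarrow> p + q \<in> V"
proof -
  have "(0, 0) \<in> {(p, q). p + q \<in> V}" using assms(3) by simp
  then obtain W1 W2 where W: "openin T W1" "openin T W2" "0 \<in> W1" "0 \<in> W2"
      "W1 \<times> W2 \<subseteq> {(p, q). p + q \<in> V}"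
    using group_topology_openin_add_preimage[OF assms(1,2)] unfolding openin_prod_topology_alt by metis
  show ?thesis
  proof
    show "openin T (W1 \<inter> W2)" "0 \<in> W1 \<inter> W2" using W by auto
    show "p + q \<in> V" if "p \<in> W1 \<inter> W2" "q \<in> W1 \<inter> W2" for p q
      using that W(5) by blast
  qed
qed

lemma group_topology_halving_chain:
  assumes "group_topology T" and "openin T V" and "0 \<in> V"
  obtains W where "W 0 = V" "\<And>n. openin T (W n)" "\<And>n. 0 \<in> W n"
    "\<And>n p q. p \<in> W (Suc n) \<Longrightarrow> q \<in> W (Suc n) \<Longrightarrow> p + q \<in> W n"
proof -
  let ?P = "\<lambda>n X. openin T X \<and> 0 \<in> X \<and> ((n::nat) = 0 \<longrightarrow> X = V)"
  let ?Q = "\<lambda>n X Y. \<forall>p\<in>Y. \<forall>q\<in>Y. p + q \<in> X"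
  have "\<exists>W. \<forall>n. ?P n (W n) \<and> ?Q n (W n) (W (Suc n))"
  proof (rule dependent_nat_choice)
    show "\<exists>X. ?P 0 X" using assms by blast
  next
    fix X n assume "?P n X"
    then obtain Y where "openin T Y" "0 \<in> Y" "\<And>p q. p \<in> Y \<Longrightarrow> q \<in> Y \<Longrightarrow> p + q \<in> X"
      using group_topology_half_nbhd[OF assms(1)] by metis
    then show "\<exists>Y. ?P (Suc n) Y \<and> ?Q n X Y" by blast
  qed
  then show thesis using that by metis
qed

lemma group_topology_limitin_uminus:
  assumes "group_topology T" and "limitin T a 0 sequentially"
  shows "limitin T (\<lambda>n. - a n) 0 sequentially"
  using continuous_map_limit[OF group_topology_continuous_uminus[OF assms(1)] assms(2)]
  by (simp add: o_def)

lemma group_topology_compactin_set_plus: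
  assumes "group_topology T" and "compactin T X" and "compactin T Y"
  shows "compactin T (X + Y)"
proof (cases "X = {} \<or> Y = {}")
  case True
  then show ?thesis by (auto simp: set_plus_def)
next
  case False
  then have "compactin (prod_topology T T) (X \<times> Y)"
    using assms(2,3) by (simp add: compactin_Times)
  from image_compactin[OF this group_topology_continuous_add[OF assms(1)]]
  show ?thesis by (simp add: set_plus_image)
qed

locale group_nbhd_base =
  fixes U :: "'i \<Rightarrow> 'a::ab_group_add set"
  assumes zero_mem: "0 \<in> U i"
    and uminus_mem: "u \<in> U i \<Longrightarrow> - u \<in> U i"
    and directed: "\<exists>k. U k \<subseteq> U i \<inter> U j"
    and halving: "\<exists>j. \<forall>u\<in>U j. \<forall>v\<in>U j. u + v \<in> U i"
begin

definition base_open :: "'a set \<Rightarrow> bool" where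
  "base_open W \<longleftrightarrow> (\<forall>x\<in>W. \<exists>i. \<forall>u\<in>U i. x + u \<in> W)"

definition base_topology :: "'a topology" where
  "base_topology = topology base_open"

lemma istopology_base_open: "istopology base_open"
  unfolding istopology_def
proof (intro conjI allI impI)
  fix S T assume S: "base_open S" and T: "base_open T"
  show "base_open (S \<inter> T)"
    unfolding base_open_def
  proof
    fix x assume "x \<in> S \<inter> T"
    then obtain i j where "\<forall>u\<in>U i. x + u \<in> S" "\<forall>u\<in>U j. x + u \<in> T"
      using S T unfolding base_open_def by blast
    moreover obtain k where "U k \<subseteq> U i \<inter> U j" using directed by blast
    ultimately show "\<exists>k. \<forall>u\<in>U k. x + u \<in> S \<inter> T" by blast
  qed
next
  fix K assume K: "\<forall>S\<in>K. base_open S"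
  show "base_open (\<Union>K)"
    unfolding base_open_def
  proof
    fix x assume "x \<in> \<Union>K"
    then obtain S where "S \<in> K" "x \<in> S" by blast
    with K obtain i where "\<forall>u\<in>U i. x + u \<in> S" unfolding base_open_def by blast
    with \<open>S \<in> K\<close> show "\<exists>i. \<forall>u\<in>U i. x + u \<in> \<Union>K" by blast
  qed
qed

lemma openin_base_topology: "openin base_topology = base_open"
  unfolding base_topology_def by (rule topology_inverse'[OF istopology_base_open])

lemma topspace_base_topology [simp]: "topspace base_topology = UNIV"
proof -
  have "base_open UNIV" unfolding base_open_def by simp
  then have "openin base_topology UNIV" by (simp add: openin_base_topology)
  then show ?thesis using openin_subset by auto
qed

lemma base_open_translate:
  assumes "base_open W"
  shows "base_open {z. z - c \<in> W}"
  unfolding base_open_def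
proof
  fix x assume "x \<in> {z. z - c \<in> W}"
  then obtain i where "\<forall>u\<in>U i. x - c + u \<in> W"
    using assms unfolding base_open_def by blast
  then have "\<forall>u\<in>U i. x + u \<in> {z. z - c \<in> W}" by (simp add: diff_add_eq)
  then show "\<exists>i. \<forall>u\<in>U i. x + u \<in> {z. z - c \<in> W}" by blast
qed

lemma base_open_nbhd_zero: "\<exists>V. base_open V \<and> 0 \<in> V \<and> V \<subseteq> U i"
proof (intro exI conjI)
  let ?V = "{z. \<exists>j. \<forall>u\<in>U j. z + u \<in> U i}"
  show "0 \<in> ?V" by auto
  show "?V \<subseteq> U i"
  proof
    fix z assume "z \<in> ?V"
    then obtain j where "\<forall>u\<in>U j. z + u \<in> U i" by blast
    then show "z \<in> U i" using zero_mem[of j] by force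
  qed
  show "base_open ?V"
    unfolding base_open_def
  proof
    fix x assume "x \<in> ?V"
    then obtain j where j: "\<forall>u\<in>U j. x + u \<in> U i" by blast
    obtain k where k: "\<forall>u\<in>U k. \<forall>v\<in>U k. u + v \<in> U j" using halving by blast
    have "\<forall>u\<in>U k. x + u \<in> ?V"
    proof
      fix u assume "u \<in> U k"
      then have "\<forall>v\<in>U k. x + u + v \<in> U i" using j k by (simp add: add.assoc)
      then show "x + u \<in> ?V" by blast
    qed
    then show "\<exists>k. \<forall>u\<in>U k. x + u \<in> ?V" by blast
  qed
qed

lemma limitin_base_topology:
  "limitin base_topology xs x sequentially \<longleftrightarrow> (\<forall>i. eventually (\<lambda>n. xs n - x \<in> U i) sequentially)"
proof
  assume lim: "limitin base_topology xs x sequentially"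
  show "\<forall>i. eventually (\<lambda>n. xs n - x \<in> U i) sequentially"
  proof
    fix i
    obtain V where V: "base_open V" "0 \<in> V" "V \<subseteq> U i"
      using base_open_nbhd_zero by blast
    have "base_open {z. z - x \<in> V}" "x \<in> {z. z - x \<in> V}"
      using base_open_translate[OF V(1)] V(2) by simp_all
    then have "eventually (\<lambda>n. xs n \<in> {z. z - x \<in> V}) sequentially"
      using lim unfolding limitin_def openin_base_topology by blast
    then show "eventually (\<lambda>n. xs n - x \<in> U i) sequentially"
      by (rule eventually_mono) (use V(3) in blast)
  qed
next
  assume ev: "\<forall>i. eventually (\<lambda>n. xs n - x \<in> U i) sequentially"
  show "limitin base_topology xs x sequentially"
    unfolding limitin_def openin_base_topology
  proof (intro conjI allI impI)
    fix W assume "base_open W \<and> x \<in> W"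
    then obtain i where i: "\<forall>u\<in>U i. x + u \<in> W" unfolding base_open_def by blast
    show "eventually (\<lambda>n. xs n \<in> W) sequentially"
      using ev[rule_format, of i] by (rule eventually_mono) (use i in force)
  qed simp
qed

lemma continuous_map_uminus_base_topology: "continuous_map base_topology base_topology uminus"
  unfolding continuous_map openin_base_topology
proof (intro conjI allI impI)
  fix W assume W: "base_open W"
  show "base_open {x \<in> topspace base_topology. - x \<in> W}"
    unfolding base_open_def
  proof
    fix x assume "x \<in> {x \<in> topspace base_topology. - x \<in> W}"
    then obtain i where i: "\<forall>u\<in>U i. - x + u \<in> W" using W unfolding base_open_def by auto
    have "\<forall>u\<in>U i. x + u \<in> {x \<in> topspace base_topology. - x \<in> W}"
    proof
      fix u assume "u \<in> U i"
      then have "- x + - u \<in> W" using i uminus_mem by blast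
      then show "x + u \<in> {x \<in> topspace base_topology. - x \<in> W}" by simp
    qed
    then show "\<exists>i. \<forall>u\<in>U i. x + u \<in> {x \<in> topspace base_topology. - x \<in> W}" by blast
  qed
qed simp

lemma continuous_map_add_base_topology:
  "continuous_map (prod_topology base_topology base_topology) base_topology (\<lambda>(x, y). x + y)"
  unfolding continuous_map
proof (intro conjI allI impI)
  fix W assume W: "openin base_topology W"
  let ?P = "{z \<in> topspace (prod_topology base_topology base_topology). (case z of (x, y) \<Rightarrow> x + y) \<in> W}"
  show "openin (prod_topology base_topology base_topology) ?P"
    unfolding openin_prod_topology_alt
  proof (intro allI impI)
    fix x y assume "(x, y) \<in> ?P"
    then obtain i where i: "\<forall>u\<in>U i. x + y + u \<in> W"
      using W unfolding openin_base_topology base_open_def by auto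
    obtain j where j: "\<forall>u\<in>U j. \<forall>v\<in>U j. u + v \<in> U i" using halving by blast
    obtain V where V: "base_open V" "0 \<in> V" "V \<subseteq> U j"
      using base_open_nbhd_zero by blast
    define X where "X = {z. z - x \<in> V}"
    define Y where "Y = {z. z - y \<in> V}"
    have "X \<times> Y \<subseteq> ?P"
    proof (clarsimp simp: X_def Y_def)
      fix p q assume "p - x \<in> V" "q - y \<in> V"
      then have "x + y + ((p - x) + (q - y)) \<in> W" using i j V(3) by blast
      then show "p + q \<in> W" by (simp add: algebra_simps)
    qed
    moreover have "openin base_topology X" "openin base_topology Y"
      unfolding X_def Y_def openin_base_topology using base_open_translate V(1) by blast+
    moreover have "x \<in> X" "y \<in> Y" using V(2) by (simp_all add: X_def Y_def)
    ultimately show "\<exists>X Y. openin base_topology X \<and> openin base_topology Y \<and> x \<in> X \<and> y \<in> Y \<and> X \<times> Y \<subseteq> ?P"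
      by blast
  qed
qed simp

lemma group_topology_base_topology: "group_topology base_topology"
  unfolding group_topology_def
  using continuous_map_add_base_topology continuous_map_uminus_base_topology by simp

end

lemma tau_seq_eqI:
  assumes "group_topology T" and "limitin T a 0 sequentially"
    and "\<And>T' U. group_topology T' \<Longrightarrow> limitin T' a 0 sequentially \<Longrightarrow> openin T' U \<Longrightarrow> openin T U"
  shows "tau_seq a = T"
  unfolding tau_seq_def
proof (rule the_equality)
  fix T' assume T': "group_topology T' \<and> limitin T' a 0 sequentially \<and>
    (\<forall>T''. group_topology T'' \<and> limitin T'' a 0 sequentially \<longrightarrow> (\<forall>U. openin T'' U \<longrightarrow> openin T' U))"
  show "T' = T"
    unfolding topology_eq using T' assms by blast
qed (use assms in blast)

definition sym_tail :: "(nat \<Rightarrow> 'a::ab_group_add) \<Rightarrow> nat \<Rightarrow> 'a set" where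
  "sym_tail a m = insert 0 (a ` {m..} \<union> uminus ` a ` {m..})"

definition tail_sums :: "(nat \<Rightarrow> 'a::ab_group_add) \<Rightarrow> (nat \<Rightarrow> nat) \<Rightarrow> 'a set" where
  "tail_sums a ms = {\<Sum>i<k. f i | k f. \<forall>i. f i \<in> sym_tail a (ms i)}"

lemma zero_in_sym_tail [simp]: "0 \<in> sym_tail a m"
  by (simp add: sym_tail_def)

lemma sym_tail_antimono: "m \<le> m' \<Longrightarrow> sym_tail a m' \<subseteq> sym_tail a m"
  unfolding sym_tail_def by auto

lemma uminus_in_sym_tail: "x \<in> sym_tail a m \<Longrightarrow> - x \<in> sym_tail a m"
  unfolding sym_tail_def by auto

lemma tail_sums_antimono: "(\<And>i. ms i \<le> ms' i) \<Longrightarrow> tail_sums a ms' \<subseteq> tail_sums a ms"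
  unfolding tail_sums_def using sym_tail_antimono by blast

lemma sym_tail_subset_tail_sums: "sym_tail a (ms 0) \<subseteq> tail_sums a ms"
proof
  fix x assume "x \<in> sym_tail a (ms 0)"
  then have "x = (\<Sum>i<Suc 0. (\<lambda>i. if i = 0 then x else 0) i)" "\<forall>i. (if i = 0 then x else 0) \<in> sym_tail a (ms i)"
    by simp_all
  then show "x \<in> tail_sums a ms" unfolding tail_sums_def by blast
qed

lemma tail_sums_halving: "\<exists>ms'. \<forall>u\<in>tail_sums a ms'. \<forall>v\<in>tail_sums a ms'. u + v \<in> tail_sums a ms"
proof (intro exI ballI)
  define ms' where "ms' i = max (ms (2 * i)) (ms (2 * i + 1))" for i
  fix u v assume "u \<in> tail_sums a ms'" "v \<in> tail_sums a ms'"
  then obtain j f l g where f: "\<forall>i. f i \<in> sym_tail a (ms' i)" "u = (\<Sum>i<j. f i)"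
    and g: "\<forall>i. g i \<in> sym_tail a (ms' i)" "v = (\<Sum>i<l. g i)"
    unfolding tail_sums_def by blast
  define n where "n = max j l"
  define f' where "f' i = (if i < j then f i else 0)" for i
  define g' where "g' i = (if i < l then g i else 0)" for i
  define h where "h i = (if even i then f' (i div 2) else g' (i div 2))" for i
  have "h i \<in> sym_tail a (ms i)" for i
  proof (cases "even i")
    case True
    then obtain q where "i = 2 * q" by blast
    then show ?thesis
      using f(1) sym_tail_antimono[of "ms i" "ms' q" a] by (auto simp: h_def f'_def ms'_def)
  next
    case False
    then obtain q where "i = 2 * q + 1" using oddE by blast
    then show ?thesis
      using g(1) sym_tail_antimono[of "ms i" "ms' q" a] by (auto simp: h_def g'_def ms'_def)
  qed
  moreover have "u + v = (\<Sum>i<2 * n. h i)"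
    unfolding sum_lessThan_double
    by (simp add: h_def sum.distrib f'_def g'_def f(2) g(2) n_def sum_lessThan_pad_zero)
  ultimately show "u + v \<in> tail_sums a ms" unfolding tail_sums_def by blast
qed

lemma group_nbhd_base_tail_sums: "group_nbhd_base (tail_sums a)"
proof
  show "0 \<in> tail_sums a ms" for ms
    using sym_tail_subset_tail_sums[of a ms] zero_in_sym_tail by blast
  show "- u \<in> tail_sums a ms" if u: "u \<in> tail_sums a ms" for u ms
  proof -
    obtain k f where "\<forall>i. f i \<in> sym_tail a (ms i)" "u = (\<Sum>i<k. f i)"
      using u unfolding tail_sums_def by blast
    then have "\<forall>i. - f i \<in> sym_tail a (ms i)" "- u = (\<Sum>i<k. - f i)"
      by (simp_all add: uminus_in_sym_tail sum_negf)
    then show ?thesis unfolding tail_sums_def by blast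
  qed
  show "\<exists>ms''. tail_sums a ms'' \<subseteq> tail_sums a ms \<inter> tail_sums a ms'" for ms ms'
    using tail_sums_antimono[of ms "\<lambda>i. max (ms i) (ms' i)" a]
      tail_sums_antimono[of ms' "\<lambda>i. max (ms i) (ms' i)" a] by auto
  show "\<exists>ms'. \<forall>u\<in>tail_sums a ms'. \<forall>v\<in>tail_sums a ms'. u + v \<in> tail_sums a ms" for ms
    by (rule tail_sums_halving)
qed

interpretation tail: group_nbhd_base "tail_sums a" for a
  by (rule group_nbhd_base_tail_sums)

lemma tail_sums_subset_nbhd:
  assumes T: "group_topology T" and lim: "limitin T a 0 sequentially"
    and "openin T V" and "0 \<in> V"
  obtains ms where "tail_sums a ms \<subseteq> V"
proof -
  obtain W where W: "W 0 = V" "\<And>n. openin T (W n)" "\<And>n. 0 \<in> W n"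
    "\<And>n p q. p \<in> W (Suc n) \<Longrightarrow> q \<in> W (Suc n) \<Longrightarrow> p + q \<in> W n"
    using group_topology_halving_chain[OF T assms(3,4)] by metis
  have "eventually (\<lambda>n. a n \<in> W (Suc k) \<and> - a n \<in> W (Suc k)) sequentially" for k
    using lim group_topology_limitin_uminus[OF T lim] W(2,3)
    unfolding limitin_def by (simp add: eventually_conj)
  then obtain ms where ms: "\<And>k n. n \<ge> ms k \<Longrightarrow> a n \<in> W (Suc k) \<and> - a n \<in> W (Suc k)"
    unfolding eventually_sequentially by metis
  have tail: "sym_tail a (ms k) \<subseteq> W (Suc k)" for k
    using ms W(3) unfolding sym_tail_def by auto
  have "tail_sums a ms \<subseteq> W 0"
  proof
    fix u assume "u \<in> tail_sums a ms"
    then obtain k f where f: "\<forall>i. f i \<in> sym_tail a (ms i)" "u = (\<Sum>i<k. f i)"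
      unfolding tail_sums_def by blast
    have "f i \<in> W (Suc i)" for i
      using f(1) tail by auto
    then show "u \<in> W 0"
      using sum_mem_halving_chain[where W=W, OF W(3,4)] f(2) by simp
  qed
  then show thesis using that W(1) by blast
qed

lemma limitin_tail_topology: "limitin (tail.base_topology a) a 0 sequentially"
proof -
  have "eventually (\<lambda>n. a n - 0 \<in> tail_sums a ms) sequentially" for ms
    using sym_tail_subset_tail_sums[of a ms] unfolding eventually_sequentially sym_tail_def by auto
  then show ?thesis by (simp add: tail.limitin_base_topology)
qed

lemma tau_seq_eq_tail_topology: "tau_seq a = tail.base_topology a"
proof (rule tau_seq_eqI)
  show "group_topology (tail.base_topology a)"
    by (rule tail.group_topology_base_topology)
  show "limitin (tail.base_topology a) a 0 sequentially"
    by (rule limitin_tail_topology)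
next
  fix T U assume T: "group_topology T" and lim: "limitin T a 0 sequentially" and U: "openin T U"
  have "\<exists>ms. \<forall>u\<in>tail_sums a ms. x + u \<in> U" if "x \<in> U" for x
  proof -
    have "openin T {z. x + z \<in> U}" "0 \<in> {z. x + z \<in> U}"
      using group_topology_openin_translate[OF T U] that by simp_all
    then obtain ms where "tail_sums a ms \<subseteq> {z. x + z \<in> U}"
      by (rule tail_sums_subset_nbhd[OF T lim])
    then show ?thesis by blast
  qed
  then show "openin (tail.base_topology a) U"
    by (simp add: tail.openin_base_topology tail.base_open_def)
qed

lemma group_ideal_Inter: "(\<And>I. I \<in> \<I> \<Longrightarrow> group_ideal I) \<Longrightarrow> group_ideal (\<Inter>\<I>)"
  unfolding group_ideal_def by (intro conjI allI impI InterI) (meson InterE)+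

lemma group_ideal_S_ideal: "group_ideal (S_ideal T)"
  unfolding S_ideal_def by (rule group_ideal_Inter) blast

lemma S_ideal_least:
  assumes "group_ideal I"
    and "\<And>x xs. limitin T xs x sequentially \<Longrightarrow> insert x (range xs) \<in> I"
  shows "S_ideal T \<subseteq> I"
  unfolding S_ideal_def using assms by blast

lemma finite_in_S_ideal: "finite F \<Longrightarrow> F \<in> S_ideal T"
  using group_ideal_S_ideal unfolding group_ideal_def by blast

lemma subset_in_S_ideal: "A \<in> S_ideal T \<Longrightarrow> B \<subseteq> A \<Longrightarrow> B \<in> S_ideal T"
  using group_ideal_S_ideal unfolding group_ideal_def by blast

lemma set_diff_grp_in_S_ideal:
  "A \<in> S_ideal T \<Longrightarrow> B \<in> S_ideal T \<Longrightarrow> set_diff_grp A B \<in> S_ideal T"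
  using group_ideal_S_ideal unfolding group_ideal_def by blast

lemma convergent_in_S_ideal: "limitin T xs x sequentially \<Longrightarrow> insert x (range xs) \<in> S_ideal T"
  unfolding S_ideal_def by blast

lemma set_diff_grp_image: "set_diff_grp A B = (\<lambda>(x, y). x - y) ` (A \<times> B)"
  unfolding set_diff_grp_def by auto

lemma finite_set_diff_grp: "finite A \<Longrightarrow> finite B \<Longrightarrow> finite (set_diff_grp A B)"
  by (simp add: set_diff_grp_image)

lemma group_ideal_countable: "group_ideal {A :: 'a::ab_group_add set. countable A}"
  unfolding group_ideal_def set_diff_grp_image
  by (auto intro: countable_finite countable_subset)

lemma countable_S_ideal: "A \<in> S_ideal T \<Longrightarrow> countable A"
  using S_ideal_least[OF group_ideal_countable, of T] by blast

lemma ideal_entourage_mono: "A \<subseteq> B \<Longrightarrow> ideal_entourage A \<subseteq> ideal_entourage B"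
  unfolding ideal_entourage_def by blast

lemma Pair_zero_in_ideal_entourage [simp]: "(x, 0) \<in> ideal_entourage A \<longleftrightarrow> x \<in> A"
  unfolding ideal_entourage_def by simp

lemma coarse_metrizable_ideal_imp_countable:
  fixes I :: "'a::ab_group_add set set"
  assumes "coarse_metrizable (ideal_coarse_structure I)"
    and countable: "\<And>A. A \<in> I \<Longrightarrow> countable A" and singleton: "\<And>x. {x} \<in> I"
  shows "countable (UNIV :: 'a set)"
proof -
  from assms(1) obtain \<B> where "countable \<B> \<and> \<B> \<subseteq> ideal_coarse_structure I \<and>
      (\<forall>E\<in>ideal_coarse_structure I. \<exists>F\<in>\<B>. E \<subseteq> F)"
    unfolding coarse_metrizable_def ..
  then have \<B>: "countable \<B>" "\<B> \<subseteq> ideal_coarse_structure I"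
    "\<forall>E\<in>ideal_coarse_structure I. \<exists>F\<in>\<B>. E \<subseteq> F"
    by simp_all
  have "\<forall>F\<in>\<B>. \<exists>A. A \<in> I \<and> F \<subseteq> ideal_entourage A"
    using \<B>(2) unfolding ideal_coarse_structure_def by blast
  then obtain A where A: "\<And>F. F \<in> \<B> \<Longrightarrow> A F \<in> I \<and> F \<subseteq> ideal_entourage (A F)"
    by metis
  have "x \<in> (\<Union>F\<in>\<B>. A F)" for x
  proof -
    have "ideal_entourage {x} \<in> ideal_coarse_structure I"
      using singleton unfolding ideal_coarse_structure_def by blast
    then obtain F where "F \<in> \<B>" "ideal_entourage {x} \<subseteq> F" using \<B>(3) by blast
    then have "(x, 0) \<in> ideal_entourage (A F)" using A by fastforce
    with \<open>F \<in> \<B>\<close> show ?thesis by auto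
  qed
  then have "UNIV = (\<Union>F\<in>\<B>. A F)" by blast
  moreover have "countable (\<Union>F\<in>\<B>. A F)"
    using \<B>(1) A countable by blast
  ultimately show ?thesis by simp
qed

lemma coarse_metrizable_ideal_coarse_structureI:
  assumes "countable \<A>" and "\<A> \<subseteq> I" and "\<And>A. A \<in> I \<Longrightarrow> \<exists>B\<in>\<A>. A \<subseteq> B"
  shows "coarse_metrizable (ideal_coarse_structure I)"
  unfolding coarse_metrizable_def
proof (intro exI conjI ballI)
  show "countable (ideal_entourage ` \<A>)" using assms(1) by simp
  show "ideal_entourage ` \<A> \<subseteq> ideal_coarse_structure I"
    using assms(2) unfolding ideal_coarse_structure_def by blast
  fix E assume "E \<in> ideal_coarse_structure I"
  then obtain A where "A \<in> I" and E: "E \<subseteq> ideal_entourage A"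
    unfolding ideal_coarse_structure_def by blast
  then obtain B where "B \<in> \<A>" "A \<subseteq> B" using assms(3) by blast
  then show "\<exists>F\<in>ideal_entourage ` \<A>. E \<subseteq> F"
    using subset_trans[OF E ideal_entourage_mono] by blast
qed

definition seq_diffs :: "(nat \<Rightarrow> 'a::ab_group_add) \<Rightarrow> 'a set" where
  "seq_diffs a = set_diff_grp (insert 0 (range a)) (insert 0 (range a))"

primrec seq_ball :: "(nat \<Rightarrow> 'a::ab_group_add) \<Rightarrow> nat \<Rightarrow> 'a set" where
  "seq_ball a 0 = {0}"
| "seq_ball a (Suc k) = set_diff_grp (seq_ball a k) (seq_diffs a)"

definition seq_bounded_ideal :: "(nat \<Rightarrow> 'a::ab_group_add) \<Rightarrow> 'a set set" where
  "seq_bounded_ideal a = {A. \<exists>F k. finite F \<and> A \<subseteq> set_diff_grp F (seq_ball a k)}"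

lemma zero_in_seq_diffs: "0 \<in> seq_diffs a"
  unfolding seq_diffs_def set_diff_grp_def by force

lemma uminus_in_seq_diffs: "x \<in> seq_diffs a \<Longrightarrow> - x \<in> seq_diffs a"
  unfolding seq_diffs_def set_diff_grp_def by force

lemma sym_tail_subset_seq_diffs: "sym_tail a m \<subseteq> seq_diffs a"
proof
  fix e assume "e \<in> sym_tail a m"
  then consider "e = 0 - 0" | n where "e = a n - 0" | n where "e = 0 - a n"
    unfolding sym_tail_def by auto
  then show "e \<in> seq_diffs a"
    unfolding seq_diffs_def set_diff_grp_def by cases blast+
qed

lemma zero_in_seq_ball: "0 \<in> seq_ball a k"
proof (induction k)
  case (Suc k)
  then have "0 - 0 \<in> seq_ball a (Suc k)"
    using zero_in_seq_diffs unfolding seq_ball.simps set_diff_grp_def by blast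
  then show ?case by simp
qed simp

lemma seq_ball_add: "x \<in> seq_ball a j \<Longrightarrow> y \<in> seq_ball a k \<Longrightarrow> x + y \<in> seq_ball a (j + k)"
proof (induction k arbitrary: y)
  case (Suc k)
  then obtain y' d where "y' \<in> seq_ball a k" "d \<in> seq_diffs a" "y = y' - d"
    unfolding seq_ball.simps set_diff_grp_def by blast
  with Suc.IH[of y'] Suc.prems(1) have "(x + y') - d \<in> seq_ball a (Suc (j + k))" "x + y = (x + y') - d"
    unfolding seq_ball.simps set_diff_grp_def by (auto simp: algebra_simps)
  then show ?case by (simp add: add_diff_eq)
qed simp

lemma seq_ball_mono: "j \<le> k \<Longrightarrow> seq_ball a j \<subseteq> seq_ball a k"
  using seq_ball_add[OF _ zero_in_seq_ball, of _ a j "k - j"] by auto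

lemma uminus_in_seq_ball: "x \<in> seq_ball a k \<Longrightarrow> - x \<in> seq_ball a k"
proof (induction k arbitrary: x)
  case (Suc k)
  then obtain x' d where "x' \<in> seq_ball a k" "d \<in> seq_diffs a" "x = x' - d"
    unfolding seq_ball.simps set_diff_grp_def by blast
  with Suc.IH[of x'] uminus_in_seq_diffs[of d a] have "- x' - (- d) \<in> seq_ball a (Suc k)"
    unfolding seq_ball.simps set_diff_grp_def by blast
  with \<open>x = x' - d\<close> show ?case by simp
qed simp

lemma sum_in_seq_ball:
  assumes "\<And>i. i < k \<Longrightarrow> f i \<in> seq_diffs a"
  shows "(\<Sum>i<k. f i) \<in> seq_ball a k"
  using assms
proof (induction k)
  case (Suc k)
  then have "(\<Sum>i<k. f i) \<in> seq_ball a k" "- f k \<in> seq_diffs a"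
    by (simp_all add: uminus_in_seq_diffs)
  then have "(\<Sum>i<k. f i) - - f k \<in> seq_ball a (Suc k)"
    unfolding seq_ball.simps set_diff_grp_def by blast
  then show ?case by simp
qed simp

lemma set_plus_sym_tail_subset_seq_ball:
  "S \<subseteq> seq_ball a k \<Longrightarrow> S + sym_tail a m \<subseteq> seq_ball a (Suc k)"
proof
  fix z assume S: "S \<subseteq> seq_ball a k" and "z \<in> S + sym_tail a m"
  then obtain x e where "x \<in> S" "e \<in> sym_tail a m" "z = x - (- e)"
    by (auto elim: set_plus_elim)
  with S sym_tail_subset_seq_diffs uminus_in_sym_tail show "z \<in> seq_ball a (Suc k)"
    unfolding seq_ball.simps set_diff_grp_def by blast
qed

lemma group_ideal_seq_bounded_ideal: "group_ideal (seq_bounded_ideal a)"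
  unfolding group_ideal_def
proof (intro conjI allI impI)
  fix F :: "'a set" assume "finite F"
  moreover have "F \<subseteq> set_diff_grp F (seq_ball a 0)"
    unfolding set_diff_grp_def by force
  ultimately show "F \<in> seq_bounded_ideal a"
    unfolding seq_bounded_ideal_def by blast
next
  fix A B :: "'a set" assume "A \<in> seq_bounded_ideal a \<and> B \<subseteq> A"
  then show "B \<in> seq_bounded_ideal a"
    unfolding seq_bounded_ideal_def by blast
next
  fix A B :: "'a set" assume "A \<in> seq_bounded_ideal a \<and> B \<in> seq_bounded_ideal a"
  then obtain F1 k1 F2 k2 where F: "finite F1" "finite F2"
    and A: "A \<subseteq> set_diff_grp F1 (seq_ball a k1)" and B: "B \<subseteq> set_diff_grp F2 (seq_ball a k2)"
    unfolding seq_bounded_ideal_def by blast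
  have "set_diff_grp A B \<subseteq> set_diff_grp (set_diff_grp F1 F2) (seq_ball a (k1 + k2))"
  proof
    fix z assume "z \<in> set_diff_grp A B"
    then obtain f1 c1 f2 c2 where f: "f1 \<in> F1" "f2 \<in> F2"
      and c: "c1 \<in> seq_ball a k1" "c2 \<in> seq_ball a k2" and z: "z = (f1 - c1) - (f2 - c2)"
      using A B unfolding set_diff_grp_def by blast
    have "c1 + - c2 \<in> seq_ball a (k1 + k2)"
      using seq_ball_add[OF c(1) uminus_in_seq_ball[OF c(2)]] .
    moreover have "z = (f1 - f2) - (c1 + - c2)" using z by (simp add: algebra_simps)
    ultimately show "z \<in> set_diff_grp (set_diff_grp F1 F2) (seq_ball a (k1 + k2))"
      using f unfolding set_diff_grp_def by blast
  qed
  then show "set_diff_grp A B \<in> seq_bounded_ideal a"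
    using finite_set_diff_grp[OF F] unfolding seq_bounded_ideal_def by blast
qed

lemma seq_bounded_ideal_subset_S_ideal:
  assumes "limitin T a 0 sequentially"
  shows "seq_bounded_ideal a \<subseteq> S_ideal T"
proof
  have "seq_diffs a \<in> S_ideal T"
    unfolding seq_diffs_def
    using set_diff_grp_in_S_ideal convergent_in_S_ideal[OF assms] by blast
  then have ball: "seq_ball a k \<in> S_ideal T" for k
    by (induction k) (simp_all add: finite_in_S_ideal set_diff_grp_in_S_ideal)
  fix A assume "A \<in> seq_bounded_ideal a"
  then obtain F k where "finite F" and A: "A \<subseteq> set_diff_grp F (seq_ball a k)"
    unfolding seq_bounded_ideal_def by blast
  then have "set_diff_grp F (seq_ball a k) \<in> S_ideal T"
    by (intro set_diff_grp_in_S_ideal finite_in_S_ideal ball)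
  then show "A \<in> S_ideal T"
    using A by (rule subset_in_S_ideal)
qed

lemma limitin_sym_tail_selection:
  assumes T: "group_topology T" and lim: "limitin T a 0 sequentially"
    and e: "\<And>m. e m \<in> sym_tail a m"
  shows "limitin T e 0 sequentially"
  unfolding limitin_def
proof (intro conjI allI impI)
  show "0 \<in> topspace T" using group_topology_topspace[OF T] by simp
  fix U assume "openin T U \<and> 0 \<in> U"
  then have "eventually (\<lambda>n. a n \<in> U \<and> - a n \<in> U) sequentially"
    using lim group_topology_limitin_uminus[OF T lim] unfolding limitin_def by (simp add: eventually_conj)
  then obtain N where N: "\<And>n. n \<ge> N \<Longrightarrow> a n \<in> U \<and> - a n \<in> U"
    unfolding eventually_sequentially by blast
  have "e m \<in> U" if "m \<ge> N" for m
    using e[of m] N that \<open>openin T U \<and> 0 \<in> U\<close> unfolding sym_tail_def by auto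
  then show "eventually (\<lambda>m. e m \<in> U) sequentially"
    unfolding eventually_sequentially by blast
qed

lemma closedin_avoid_set_plus_sym_tail:
  assumes T: "group_topology T" and lim: "limitin T a 0 sequentially"
    and S: "closedin T S" and y: "y \<notin> S"
  shows "\<exists>m. y \<notin> S + sym_tail a m"
proof (rule ccontr)
  assume "\<nexists>m. y \<notin> S + sym_tail a m"
  then have "\<forall>m. \<exists>e. e \<in> sym_tail a m \<and> y + - e \<in> S"
    by (force elim: set_plus_elim)
  then obtain e where e: "\<And>m. e m \<in> sym_tail a m" and in_S: "\<And>m. y + - e m \<in> S"
    by metis
  have "limitin T (\<lambda>m. - e m) 0 sequentially"
    using group_topology_limitin_uminus[OF T limitin_sym_tail_selection[OF T lim e]] .
  from continuous_map_limit[OF group_topology_continuous_translate[OF T] this, of y]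
  have "limitin T (\<lambda>m. y + - e m) y sequentially" by (simp add: o_def)
  then have "y \<in> S"
    using S in_S by (intro limitin_closedin) auto
  with y show False by contradiction
qed

lemma finite_avoid_set_plus_sym_tail:
  assumes T: "group_topology T" and lim: "limitin T a 0 sequentially"
    and S: "closedin T S" and "finite Y" and "Y \<inter> S = {}"
  shows "\<exists>m. Y \<inter> (S + sym_tail a m) = {}"
  using \<open>finite Y\<close> \<open>Y \<inter> S = {}\<close>
proof (induction Y rule: finite_induct)
  case (insert y Y)
  then obtain m1 where m1: "Y \<inter> (S + sym_tail a m1) = {}" by blast
  obtain m2 where m2: "y \<notin> S + sym_tail a m2"
    using closedin_avoid_set_plus_sym_tail[OF T lim S] insert.prems by blast
  have "S + sym_tail a m' \<subseteq> S + sym_tail a m" if "m \<le> m'" for m m'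
    using set_plus_mono2[OF order_refl sym_tail_antimono[OF that]] .
  then have "S + sym_tail a (max m1 m2) \<subseteq> (S + sym_tail a m1) \<inter> (S + sym_tail a m2)"
    by simp
  with m1 m2 show ?case by blast
qed simp

lemma compactin_sym_tail:
  assumes T: "group_topology T" and lim: "limitin T a 0 sequentially"
  shows "compactin T (sym_tail a m)"
proof -
  have "compactin T (insert 0 (a ` {m..}))" "compactin T (insert 0 ((\<lambda>n. - a n) ` {m..}))"
    using compactin_sequence_with_limit[OF lim, of "a ` {m..}"]
      compactin_sequence_with_limit[OF group_topology_limitin_uminus[OF T lim], of "(\<lambda>n. - a n) ` {m..}"]
      group_topology_topspace[OF T] by auto
  from compactin_Un[OF this] show ?thesis
    unfolding sym_tail_def by (simp add: image_image insert_absorb)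
qed

lemma extend_by_sym_tail_avoiding:
  assumes T: "group_topology T" and H: "Hausdorff_space T" and lim: "limitin T a 0 sequentially"
    and S: "compactin T S" "S \<subseteq> seq_ball a n" and z: "\<And>j. j \<le> n \<Longrightarrow> z j \<notin> S"
  obtains m where "compactin T (S + sym_tail a m)" "S + sym_tail a m \<subseteq> seq_ball a (Suc n)"
    "\<And>j. j \<le> n \<Longrightarrow> z j \<notin> S + sym_tail a m"
proof -
  have "z ` {..n} \<inter> S = {}" using z by blast
  moreover have "closedin T S" using S(1) compactin_imp_closedin[OF H] by blast
  ultimately obtain m where m: "z ` {..n} \<inter> (S + sym_tail a m) = {}"
    using finite_avoid_set_plus_sym_tail[OF T lim] by blast
  show thesis
  proof (rule that)
    show "compactin T (S + sym_tail a m)"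
      using group_topology_compactin_set_plus[OF T S(1) compactin_sym_tail[OF T lim]] .
    show "S + sym_tail a m \<subseteq> seq_ball a (Suc n)"
      using S(2) by (rule set_plus_sym_tail_subset_seq_ball)
    show "z j \<notin> S + sym_tail a m" if "j \<le> n" for j
      using m that by blast
  qed
qed

lemma tail_sums_avoiding:
  assumes T: "group_topology T" and H: "Hausdorff_space T" and lim: "limitin T a 0 sequentially"
    and z: "\<And>j. z j \<notin> seq_ball a j"
  obtains ms where "\<And>k f j. (\<And>i. f i \<in> sym_tail a (ms i)) \<Longrightarrow> j < k \<Longrightarrow> (\<Sum>i<k. f i) \<noteq> z j"
proof -
  \<comment> \<open>\<open>S\<^sub>n\<close> collects the sums of \<open>n\<close> elements of the tails chosen so far; \<open>S\<^sub>n \<subseteq> C\<^sub>n\<close> keeps \<open>z\<^sub>n\<close> out.\<close>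
  let ?P = "\<lambda>n S. compactin T S \<and> S \<subseteq> seq_ball a n \<and> (\<forall>j<n. z j \<notin> S) \<and> (n = 0 \<longrightarrow> S = {0})"
  let ?Q = "\<lambda>n S S'. \<exists>m. S' = S + sym_tail a m"
  have "\<exists>Ss. \<forall>n. ?P n (Ss n) \<and> ?Q n (Ss n) (Ss (Suc n))"
  proof (rule dependent_nat_choice)
    show "\<exists>S. ?P 0 S" using group_topology_topspace[OF T] by auto
  next
    fix S n assume P: "?P n S"
    have "z j \<notin> S" if "j \<le> n" for j
      using P z[of n] that by (cases "j = n") auto
    with P obtain m where "compactin T (S + sym_tail a m)" "S + sym_tail a m \<subseteq> seq_ball a (Suc n)"
      "\<And>j. j \<le> n \<Longrightarrow> z j \<notin> S + sym_tail a m"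
      using extend_by_sym_tail_avoiding[OF T H lim] by metis
    then have "?P (Suc n) (S + sym_tail a m)" by (simp add: less_Suc_eq_le)
    then show "\<exists>S'. ?P (Suc n) S' \<and> ?Q n S S'" by blast
  qed
  then obtain Ss ms where Ss: "\<And>n. ?P n (Ss n)" and step: "\<And>n. Ss (Suc n) = Ss n + sym_tail a (ms n)"
    by metis
  have sums: "(\<Sum>i<k. f i) \<in> Ss k" if f: "\<And>i. f i \<in> sym_tail a (ms i)" for f k
  proof (induction k)
    case 0
    then show ?case using Ss[of 0] by simp
  next
    case (Suc k)
    then show ?case using f[of k] by (simp add: step set_plus_intro)
  qed
  show thesis
  proof (rule that)
    fix k j :: nat and f assume "\<And>i. f i \<in> sym_tail a (ms i)" "j < k"
    then show "(\<Sum>i<k. f i) \<noteq> z j" using sums Ss[of k] by metis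
  qed
qed

lemma eventually_in_seq_ball:
  assumes T: "group_topology T" and H: "Hausdorff_space T" and lim: "limitin T a 0 sequentially"
    and y: "\<And>ms. eventually (\<lambda>n. y n \<in> tail_sums a ms) sequentially"
  shows "\<exists>k. eventually (\<lambda>n. y n \<in> seq_ball a k) sequentially"
proof (rule ccontr)
  assume "\<nexists>k. eventually (\<lambda>n. y n \<in> seq_ball a k) sequentially"
  then have "\<forall>j. \<exists>n\<ge>j. y n \<notin> seq_ball a j"
    unfolding eventually_sequentially by blast
  then obtain r where r: "\<And>j. r j \<ge> j" "\<And>j. y (r j) \<notin> seq_ball a j"
    by metis
  obtain ms where ms: "\<And>k f j. (\<And>i. f i \<in> sym_tail a (ms i)) \<Longrightarrow> j < k \<Longrightarrow> (\<Sum>i<k. f i) \<noteq> y (r j)"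
    using tail_sums_avoiding[OF T H lim r(2)] by blast
  obtain N where "\<And>n. n \<ge> N \<Longrightarrow> y n \<in> tail_sums a ms"
    using y[of ms] unfolding eventually_sequentially by blast
  then obtain k f where f: "\<And>i. f i \<in> sym_tail a (ms i)" and yN: "y (r N) = (\<Sum>i<k. f i)"
    using r(1)[of N] unfolding tail_sums_def by blast
  show False
  proof (cases "k \<le> N")
    case True
    have "(\<Sum>i<k. f i) \<in> seq_ball a k"
      using f sym_tail_subset_seq_diffs by (intro sum_in_seq_ball) blast
    then have "y (r N) \<in> seq_ball a N"
      unfolding yN using seq_ball_mono[OF True] by (rule rev_subsetD)
    with r(2) show False by blast
  next
    case False
    then have "(\<Sum>i<k. f i) \<noteq> y (r N)"
      using ms[OF f] by simp
    with yN show False by simp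
  qed
qed

lemma convergent_in_seq_bounded_ideal:
  assumes T: "group_topology T" "Hausdorff_space T" "limitin T a 0 sequentially"
    and xs: "limitin (tau_seq a) xs x sequentially"
  shows "insert x (range xs) \<in> seq_bounded_ideal a"
proof -
  have "eventually (\<lambda>n. xs n - x \<in> tail_sums a ms) sequentially" for ms
    using xs by (simp add: tau_seq_eq_tail_topology tail.limitin_base_topology)
  then obtain k where "eventually (\<lambda>n. xs n - x \<in> seq_ball a k) sequentially"
    using eventually_in_seq_ball[OF T, of "\<lambda>n. xs n - x"] by blast
  then obtain N where kN: "\<And>n. n \<ge> N \<Longrightarrow> xs n - x \<in> seq_ball a k"
    unfolding eventually_sequentially by blast
  let ?F = "insert x (xs ` {..<N})"
  have "z \<in> set_diff_grp ?F (seq_ball a k)" if z: "z \<in> insert x (range xs)" for z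
  proof (cases "z \<in> ?F")
    case True
    then have "z - 0 \<in> set_diff_grp ?F (seq_ball a k)"
      using zero_in_seq_ball unfolding set_diff_grp_def by blast
    then show ?thesis by simp
  next
    case False
    then obtain n where n: "z = xs n" "\<not> n < N"
      using z by blast
    then have "- (xs n - x) \<in> seq_ball a k"
      using kN[of n] n(2) by (intro uminus_in_seq_ball) simp
    then have "x - - (xs n - x) \<in> set_diff_grp ?F (seq_ball a k)"
      unfolding set_diff_grp_def by blast
    then show ?thesis using n(1) by simp
  qed
  then show ?thesis
    unfolding seq_bounded_ideal_def by (intro CollectI exI[of _ ?F] exI[of _ k]) blast
qed

lemma S_ideal_tau_seq:
  assumes "group_topology T" "Hausdorff_space T" "limitin T a 0 sequentially"
  shows "S_ideal (tau_seq a) = seq_bounded_ideal a"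
proof
  show "S_ideal (tau_seq a) \<subseteq> seq_bounded_ideal a"
    using group_ideal_seq_bounded_ideal convergent_in_seq_bounded_ideal[OF assms]
    by (rule S_ideal_least)
  show "seq_bounded_ideal a \<subseteq> S_ideal (tau_seq a)"
    by (rule seq_bounded_ideal_subset_S_ideal) (simp add: tau_seq_eq_tail_topology limitin_tail_topology)
qed

lemma coarse_metrizable_seq_bounded_ideal:
  fixes a :: "nat \<Rightarrow> 'a::ab_group_add"
  assumes "countable (UNIV :: 'a set)"
  shows "coarse_metrizable (ideal_coarse_structure (seq_bounded_ideal a))"
proof (rule coarse_metrizable_ideal_coarse_structureI)
  let ?\<A> = "(\<lambda>(F, k). set_diff_grp F (seq_ball a k)) ` ({F. finite F} \<times> UNIV)"
  show "countable ?\<A>"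
    using countable_Collect_finite_subset[OF assms] by simp
  show "?\<A> \<subseteq> seq_bounded_ideal a"
    by (auto simp: seq_bounded_ideal_def)
  show "\<exists>B\<in>?\<A>. A \<subseteq> B" if A: "A \<in> seq_bounded_ideal a" for A
  proof -
    obtain F k where "finite F" "A \<subseteq> set_diff_grp F (seq_ball a k)"
      using A unfolding seq_bounded_ideal_def by blast
    then show ?thesis by force
  qed
qed

theorem theorem7:
  fixes a :: "nat \<Rightarrow> 'a::ab_group_add"
  assumes "infinite (UNIV :: 'a set)"
    and "T_sequence a"
  shows "coarse_metrizable (ideal_coarse_structure (S_ideal (tau_seq a)))
           \<longleftrightarrow> countable (UNIV :: 'a set)"
proof -
  obtain T where T: "group_topology T" "Hausdorff_space T" "limitin T a 0 sequentially"
    using assms(2) unfolding T_sequence_def by blast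
  show ?thesis
  proof
    assume "coarse_metrizable (ideal_coarse_structure (S_ideal (tau_seq a)))"
    then show "countable (UNIV :: 'a set)"
      by (rule coarse_metrizable_ideal_imp_countable) (simp_all add: countable_S_ideal finite_in_S_ideal)
  next
    assume "countable (UNIV :: 'a set)"
    then show "coarse_metrizable (ideal_coarse_structure (S_ideal (tau_seq a)))"
      unfolding S_ideal_tau_seq[OF T] by (rule coarse_metrizable_seq_bounded_ideal)
  qed
qed

end
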